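(* Let $G=D_n\times\mathbb Z/2$, $H=D_n\times\{0\}$, and let $c_3\le c_4$ be integers with $c_3\ge2$, $c_4>2$. Suppose $f:T(2,2,c_3,c_4)\to G$ is admissible for cover type III-b, i.e. $f$ is surjective, $f(\gamma_1),f(\gamma_2)$ have order 2, $f(\gamma_3)$ has order $c_3$, $f(\gamma_4)$ has order $c_4$, the second components of $f(\gamma_1),f(\gamma_2)$ are $1$ and those of $f(\gamma_3),f(\gamma_4)$ are $0$. Then $c_3=2$ and $c_4=n$, and up to equivalence there is a unique admissible $f$, given by the Hurwitz vector $((yx,1),(e,1),(y,0),(x,0))$.
   Context: $D_n=\langle x,y\mid x^n=y^2=1,\ yxy^{-1}=x^{-1}\rangle$ with neutral element $e$; $\mathbb Z/2$ is written additively with generator $1$. $T(m_1,\dots,m_r):=\langle\gamma_1,\dots,\gamma_r\mid \gamma_1\cdots\gamma_r=1,\ \gamma_i^{m_i}=1\rangle$. The Hurwitz vector of $f$ is $(f(\gamma_1),\dots,f(\gamma_r))$. The braid group $\mathcal B_r$ acts on Hurwitz vectors by $\sigma_i:(\dots,v_i,v_{i+1},\dots)\mapsto(\dots,v_iv_{i+1}v_i^{-1},v_i,\dots)$, and $\mathrm{Aut}(G)_H$ (automorphisms of $G$ preserving $H$) acts componentwise. Two admissible $f,f'$ are equivalent if their Hurwitz vectors lie in the same $\mathcal B_r\times\mathrm{Aut}(G)_H$-orbit. *)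

theory Defs
  imports "HOL-Algebra.Multiplicative_Group" "HOL-Algebra.Generated_Groups"
begin

text \<open>The element (a, s) with 0 <= a < n stands for x^a y^s (s = True means y^1).
  Multiplication: x^a y^s . x^b y^t = x^(a + (-1)^s b) y^(s+t), which is the group
  presented by x^n = y^2 = 1, y x y^-1 = x^-1.\<close>

definition dih_mult :: "nat \<Rightarrow> int \<times> bool \<Rightarrow> int \<times> bool \<Rightarrow> int \<times> bool" where
  "dih_mult n p q = ((fst p + (if snd p then - fst q else fst q)) mod int n, snd p \<noteq> snd q)"

definition Dih :: "nat \<Rightarrow> (int \<times> bool) monoid" where
  "Dih n = \<lparr> carrier = {0..<int n} \<times> (UNIV :: bool set), mult = dih_mult n, one = (0, False) \<rparr>"

definition dih_x :: "nat \<Rightarrow> int \<times> bool" where "dih_x n = (1 mod int n, False)"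
definition dih_y :: "int \<times> bool" where "dih_y = (0, True)"
definition dih_e :: "int \<times> bool" where "dih_e = (0, False)"

text \<open>Z/2 written additively: False = 0, True = 1 (the generator), addition = xor.\<close>
definition Z2 :: "bool monoid" where
  "Z2 = \<lparr> carrier = UNIV, mult = (\<lambda>a b. a \<noteq> b), one = False \<rparr>"

definition GG :: "nat \<Rightarrow> ((int \<times> bool) \<times> bool) monoid" where
  "GG n = Dih n \<times>\<times> Z2"

definition HH :: "nat \<Rightarrow> ((int \<times> bool) \<times> bool) set" where
  "HH n = carrier (Dih n) \<times> {False}"

text \<open>Braid generator sigma_i (0-based index i, acting on positions i, i+1) and its inverse.\<close>
definition braid_sigma :: "('a, 'b) monoid_scheme \<Rightarrow> nat \<Rightarrow> 'a list \<Rightarrow> 'a list" where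
  "braid_sigma G i v =
     v[i := v ! i \<otimes>\<^bsub>G\<^esub> v ! Suc i \<otimes>\<^bsub>G\<^esub> inv\<^bsub>G\<^esub> (v ! i), Suc i := v ! i]"

definition braid_sigma_inv :: "('a, 'b) monoid_scheme \<Rightarrow> nat \<Rightarrow> 'a list \<Rightarrow> 'a list" where
  "braid_sigma_inv G i v =
     v[i := v ! Suc i, Suc i := inv\<^bsub>G\<^esub> (v ! Suc i) \<otimes>\<^bsub>G\<^esub> v ! i \<otimes>\<^bsub>G\<^esub> v ! Suc i]"

definition Aut_pres :: "('a, 'b) monoid_scheme \<Rightarrow> 'a set \<Rightarrow> ('a \<Rightarrow> 'a) set" where
  "Aut_pres G H = {\<phi>. \<phi> \<in> iso G G \<and> \<phi> ` H = H}"

inductive hmove :: "('a, 'b) monoid_scheme \<Rightarrow> 'a set \<Rightarrow> 'a list \<Rightarrow> 'a list \<Rightarrow> bool"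
  for G H where
  sigma: "Suc i < length v \<Longrightarrow> hmove G H v (braid_sigma G i v)"
| sigma_inv: "Suc i < length v \<Longrightarrow> hmove G H v (braid_sigma_inv G i v)"
| aut: "\<phi> \<in> Aut_pres G H \<Longrightarrow> hmove G H v (map \<phi> v)"

definition hurwitz_equiv :: "('a, 'b) monoid_scheme \<Rightarrow> 'a set \<Rightarrow> 'a list \<Rightarrow> 'a list \<Rightarrow> bool" where
  "hurwitz_equiv G H v w = (hmove G H)\<^sup>*\<^sup>* v w"

text \<open>A homomorphism f : T(2,2,c3,c4) -> G is determined by its Hurwitz vector
  v = (f(gamma_1),...,f(gamma_4)); the tuples arising are exactly those with entries in G,
  v1 v2 v3 v4 = 1 and v_i^(m_i) = 1. Admissible for III-b: f surjective, orders exactly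
  2,2,c3,c4, Z/2-components 1,1,0,0.\<close>
definition admissible_IIIb :: "nat \<Rightarrow> nat \<Rightarrow> nat \<Rightarrow> ((int \<times> bool) \<times> bool) list \<Rightarrow> bool" where
  "admissible_IIIb n c3 c4 v \<longleftrightarrow>
     length v = 4 \<and> set v \<subseteq> carrier (GG n) \<and>
     v ! 0 \<otimes>\<^bsub>GG n\<^esub> v ! 1 \<otimes>\<^bsub>GG n\<^esub> v ! 2 \<otimes>\<^bsub>GG n\<^esub> v ! 3 = \<one>\<^bsub>GG n\<^esub> \<and>
     generate (GG n) (set v) = carrier (GG n) \<and>
     group.ord (GG n) (v ! 0) = 2 \<and> group.ord (GG n) (v ! 1) = 2 \<and>
     group.ord (GG n) (v ! 2) = c3 \<and> group.ord (GG n) (v ! 3) = c4 \<and>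
     snd (v ! 0) = True \<and> snd (v ! 1) = True \<and> snd (v ! 2) = False \<and> snd (v ! 3) = False"

end

theory Submission
  imports Defs
begin

(* Write the element ((i, r), s) of D_n x Z/2 as x^i y^r z^s, with z the generator of Z/2.
   The reflection parities r of the four entries add up to zero. The fourth entry has order
   c4 > 2, so it is a rotation x^k; if the third were a rotation as well, the first two would
   have equal parity and all entries would lie in C_n x Z/2 or in the subgroup {r = s}. Hence the third entry is a reflection (c3 = 2) and
   the first two are a reflection x^q y z and a rotation x^p z with 2p = 0. A common divisor d
   of k and n would confine all entries to the subgroup generated by x^d, x^j y and x^p z, so k
   is a unit mod n and c4 = n. After a braid move that puts the reflection first, the
   automorphism x |-> x^u, y |-> x^(-uj) y, z |-> x^(-up) z with u k = 1 mod n carries the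
   vector to the standard one. *)

lemma (in group) ord_eq_2_iff:
  assumes "x \<in> carrier G"
  shows "ord x = 2 \<longleftrightarrow> x \<noteq> \<one> \<and> x \<otimes> x = \<one>"
proof -
  have "x \<otimes> x = \<one> \<longleftrightarrow> ord x dvd 2"
    using pow_eq_id[OF assms, of 2] assms by (simp add: numeral_2_eq_2)
  moreover have "d dvd 2 \<and> d \<noteq> 1 \<longleftrightarrow> d = 2" for d :: nat
    using dvd_imp_le[of d 2] by (cases d) (auto simp: numeral_2_eq_2)
  ultimately show ?thesis
    using ord_eq_1[OF assms] by metis
qed

lemma (in group) finite_subgroupI:
  assumes "finite (carrier G)" "H \<subseteq> carrier G" "\<one> \<in> H"
    and mult: "\<And>x y. x \<in> H \<Longrightarrow> y \<in> H \<Longrightarrow> x \<otimes> y \<in> H"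
  shows "subgroup H G"
proof (rule subgroupI)
  fix x assume x: "x \<in> H"
  then have xc: "x \<in> carrier G" using assms(2) by blast
  have pow: "x [^] m \<in> H" for m :: nat
    by (induction m) (use assms x in auto)
  have "x [^] (ord x - 1) \<otimes> x = x [^] ord x"
    using ord_ge_1[OF assms(1) xc] xc by (simp flip: nat_pow_Suc)
  then have "inv x = x [^] (ord x - 1)"
    using xc by (intro inv_equality) auto
  then show "inv x \<in> H" using pow by simp
qed (use assms in auto)

lemma (in group) generating_set_subgroup_eq_carrier:
  assumes "generate G X = carrier G" "subgroup K G" "X \<subseteq> K"
  shows "K = carrier G"
  using generate_subgroup_incl[OF assms(3,2)] assms(1) subgroup.subset[OF assms(2)] by blast

lemma Dih_group: "n \<ge> 1 \<Longrightarrow> group (Dih n)"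
proof (rule groupI)
  fix x assume x: "x \<in> carrier (Dih n)" and "n \<ge> 1"
  obtain i r where "x = (i, r)" by fastforce
  then have "(if r then x else (- i mod int n, False)) \<otimes>\<^bsub>Dih n\<^esub> x = \<one>\<^bsub>Dih n\<^esub>"
    using x by (simp add: Dih_def dih_mult_def mod_simps)
  moreover have "(if r then x else (- i mod int n, False)) \<in> carrier (Dih n)"
    using x \<open>n \<ge> 1\<close> by (simp add: Dih_def)
  ultimately show "\<exists>y\<in>carrier (Dih n). y \<otimes>\<^bsub>Dih n\<^esub> x = \<one>\<^bsub>Dih n\<^esub>" by blast
next
  fix x y z assume "x \<in> carrier (Dih n)" "y \<in> carrier (Dih n)" "z \<in> carrier (Dih n)"
  show "x \<otimes>\<^bsub>Dih n\<^esub> y \<otimes>\<^bsub>Dih n\<^esub> z = x \<otimes>\<^bsub>Dih n\<^esub> (y \<otimes>\<^bsub>Dih n\<^esub> z)"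
    by (cases x; cases y; cases z) (auto simp: Dih_def dih_mult_def mod_simps algebra_simps)
qed (auto simp: Dih_def dih_mult_def)

lemma GG_group: "n \<ge> 1 \<Longrightarrow> group (GG n)"
  unfolding GG_def Z2_def by (intro DirProd_group Dih_group groupI) auto

lemma GG_carrier: "carrier (GG n) = ({0..<int n} \<times> UNIV) \<times> UNIV"
  by (simp add: GG_def Dih_def Z2_def)

lemma GG_mult [simp]: "x \<otimes>\<^bsub>GG n\<^esub> y = (dih_mult n (fst x) (fst y), snd x \<noteq> snd y)"
  by (simp add: GG_def mult_DirProd' Dih_def Z2_def)

lemma GG_one [simp]: "\<one>\<^bsub>GG n\<^esub> = ((0, False), False)"
  by (simp add: GG_def Dih_def Z2_def)

lemma GG_rotation_pow:
  "((k, False), False) [^]\<^bsub>GG n\<^esub> (m :: nat) = (((k * int m) mod int n, False), False)"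
  by (induction m) (simp_all add: dih_mult_def mod_simps algebra_simps)

lemma GG_ord_rotation:
  assumes "n \<ge> 1" "0 \<le> k" "k < int n" "coprime k (int n)"
  shows "group.ord (GG n) ((k, False), False) = n"
proof -
  interpret group "GG n" using GG_group assms(1) .
  have "((k, False), False) [^]\<^bsub>GG n\<^esub> m = \<one>\<^bsub>GG n\<^esub> \<longleftrightarrow> n dvd m" for m
    using coprime_dvd_mult_right_iff[of "int n" k "int m"] assms(4)
    by (simp add: GG_rotation_pow coprime_commute flip: dvd_eq_mod_eq_0)
  then show ?thesis
    using assms by (subst ord_unique) (auto simp: GG_carrier)
qed

lemma GG_ord_reflection:
  assumes "n \<ge> 1" "0 \<le> i" "i < int n"
  shows "group.ord (GG n) ((i, True), s) = 2"
proof -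
  interpret group "GG n" using GG_group assms(1) .
  show ?thesis
    using assms by (subst ord_eq_2_iff) (auto simp: GG_carrier dih_mult_def)
qed

lemma GG_finite_subgroupI:
  assumes "n \<ge> 1" "K \<subseteq> carrier (GG n)" "((0, False), False) \<in> K"
    and "\<And>x y. x \<in> K \<Longrightarrow> y \<in> K \<Longrightarrow> (dih_mult n (fst x) (fst y), snd x \<noteq> snd y) \<in> K"
  shows "subgroup K (GG n)"
proof -
  interpret group "GG n" using GG_group assms(1) .
  show ?thesis
    using assms by (intro finite_subgroupI) (auto simp: GG_carrier)
qed

definition rotation_subgroup :: "nat \<Rightarrow> ((int \<times> bool) \<times> bool) set" where
  "rotation_subgroup n = {x \<in> carrier (GG n). \<not> snd (fst x)}"

definition diagonal_subgroup :: "nat \<Rightarrow> ((int \<times> bool) \<times> bool) set" where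
  "diagonal_subgroup n = {x \<in> carrier (GG n). snd (fst x) = snd x}"

lemma subgroup_rotation_subgroup: "n \<ge> 1 \<Longrightarrow> subgroup (rotation_subgroup n) (GG n)"
  by (rule GG_finite_subgroupI) (auto simp: rotation_subgroup_def GG_carrier dih_mult_def)

lemma subgroup_diagonal_subgroup: "n \<ge> 1 \<Longrightarrow> subgroup (diagonal_subgroup n) (GG n)"
  by (rule GG_finite_subgroupI) (auto simp: diagonal_subgroup_def GG_carrier dih_mult_def)

lemma GG_generating_set_reflections:
  assumes "n \<ge> 1" "X \<subseteq> carrier (GG n)" "generate (GG n) X = carrier (GG n)"
  shows "\<exists>x\<in>X. snd (fst x)" and "\<exists>x\<in>X. snd (fst x) \<noteq> snd x"
proof -
  interpret group "GG n" using GG_group assms(1) .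
  have y: "((0, True), False) \<in> carrier (GG n)" using assms(1) by (simp add: GG_carrier)
  show "\<exists>x\<in>X. snd (fst x)"
  proof (rule ccontr)
    assume "\<not> ?thesis"
    then have "rotation_subgroup n = carrier (GG n)"
      using assms(2) subgroup_rotation_subgroup[OF assms(1)]
      by (intro generating_set_subgroup_eq_carrier[OF assms(3)]) (auto simp: rotation_subgroup_def)
    then have "((0, True), False) \<in> rotation_subgroup n" using y by simp
    then show False by (simp add: rotation_subgroup_def)
  qed
  show "\<exists>x\<in>X. snd (fst x) \<noteq> snd x"
  proof (rule ccontr)
    assume "\<not> ?thesis"
    then have "diagonal_subgroup n = carrier (GG n)"
      using assms(2) subgroup_diagonal_subgroup[OF assms(1)]
      by (intro generating_set_subgroup_eq_carrier[OF assms(3)]) (auto simp: diagonal_subgroup_def)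
    then have "((0, True), False) \<in> diagonal_subgroup n" using y by simp
    then show False by (simp add: diagonal_subgroup_def)
  qed
qed

(* The exponent of x in (x^j y)^r (x^t z)^s, provided 2t = 0 mod n. *)
definition offset :: "int \<Rightarrow> int \<Rightarrow> bool \<Rightarrow> bool \<Rightarrow> int" where
  "offset j t r s = (if r then j else 0) + (if s then t else 0)"

lemma offset_cocycle:
  "2 * t dvd offset j t (r \<noteq> r') (s \<noteq> s')
     - (offset j t r s + (if r then - offset j t r' s' else offset j t r' s'))"
  by (cases r; cases r'; cases s; cases s') (auto simp: offset_def)

(* For d dividing n and 2t, the subgroup generated by x^d, x^j y and x^t z. *)
definition offset_subgroup :: "nat \<Rightarrow> int \<Rightarrow> int \<Rightarrow> int \<Rightarrow> ((int \<times> bool) \<times> bool) set" where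
  "offset_subgroup n d j t =
     {x \<in> carrier (GG n). d dvd fst (fst x) - offset j t (snd (fst x)) (snd x)}"

lemma subgroup_offset_subgroup:
  assumes "n \<ge> 1" "d dvd int n" "d dvd 2 * t"
  shows "subgroup (offset_subgroup n d j t) (GG n)"
proof (rule GG_finite_subgroupI)
  fix x y assume "x \<in> offset_subgroup n d j t" "y \<in> offset_subgroup n d j t"
  moreover obtain i r s i' r' s' where xy: "x = ((i, r), s)" "y = ((i', r'), s')"
    by (metis prod.collapse)
  ultimately have a: "d dvd i - offset j t r s" and b: "d dvd i' - offset j t r' s'"
    by (simp_all add: offset_subgroup_def)
  define c where "c = offset j t (r \<noteq> r') (s \<noteq> s')
    - (offset j t r s + (if r then - offset j t r' s' else offset j t r' s'))"
  define P where "P = i + (if r then - i' else i')"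
  have "P - offset j t (r \<noteq> r') (s \<noteq> s')
      = (i - offset j t r s) + (if r then - (i' - offset j t r' s') else i' - offset j t r' s') - c"
    unfolding P_def c_def by (cases r) simp_all
  moreover have "d dvd c"
    unfolding c_def using assms(3) offset_cocycle dvd_trans by blast
  moreover have "d dvd (if r then - (i' - offset j t r' s') else i' - offset j t r' s')"
    using b by (simp add: dvd_diff_commute)
  ultimately have "d dvd P - offset j t (r \<noteq> r') (s \<noteq> s')"
    using a by (simp add: dvd_add dvd_diff)
  moreover have "d dvd P mod int n - P"
    using assms(2) by (rule dvd_trans) (simp add: mod_eq_dvd_iff[symmetric])
  ultimately have "d dvd P mod int n - offset j t (r \<noteq> r') (s \<noteq> s')"
    using dvd_add by fastforce
  moreover have "(dih_mult n (fst x) (fst y), snd x \<noteq> snd y) = ((P mod int n, r \<noteq> r'), s \<noteq> s')"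
    by (simp add: xy P_def dih_mult_def)
  ultimately show "(dih_mult n (fst x) (fst y), snd x \<noteq> snd y) \<in> offset_subgroup n d j t"
    using assms(1) by (simp add: offset_subgroup_def GG_carrier)
qed (use assms(1) in \<open>auto simp: offset_subgroup_def GG_carrier offset_def\<close>)

lemma GG_generating_set_coprime:
  assumes n: "n \<ge> 1"
    and X: "X = {((q, True), True), ((p, False), True), ((j, True), False), ((k, False), False)}"
    and "X \<subseteq> carrier (GG n)" "generate (GG n) X = carrier (GG n)"
    and p: "int n dvd 2 * p" and rel: "int n dvd q - p - j + k"
  shows "coprime k (int n)"
proof (rule coprimeI)
  fix d assume dk: "d dvd k" and dn: "d dvd int n"
  interpret group "GG n" using GG_group n .
  have "d dvd q - p - j + k - k" using dvd_trans[OF dn rel] dk by (rule dvd_diff)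
  then have "X \<subseteq> offset_subgroup n d j p"
    using assms(3) dk unfolding X by (auto simp: offset_subgroup_def offset_def algebra_simps)
  then have "offset_subgroup n d j p = carrier (GG n)"
    by (intro generating_set_subgroup_eq_carrier[OF assms(4)] subgroup_offset_subgroup[OF n dn]
        dvd_trans[OF dn p])
  moreover have "((1 mod int n, False), False) \<in> carrier (GG n)"
    using n by (simp add: GG_carrier)
  ultimately have "((1 mod int n, False), False) \<in> offset_subgroup n d j p"
    by simp
  then have "d dvd 1 mod int n"
    by (simp add: offset_subgroup_def offset_def)
  then show "is_unit d"
    using dn by (simp add: dvd_mod_iff)
qed

(* The endomorphism x |-> x^u, y |-> x^j y, z |-> x^t z; x^t is central when 2t = 0 mod n. *)
definition affine_aut ::
    "nat \<Rightarrow> int \<Rightarrow> int \<Rightarrow> int \<Rightarrow> (int \<times> bool) \<times> bool \<Rightarrow> (int \<times> bool) \<times> bool" where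
  "affine_aut n u j t x =
     (((u * fst (fst x) + offset j t (snd (fst x)) (snd x)) mod int n, snd (fst x)), snd x)"

lemma affine_aut_hom:
  assumes n: "n \<ge> 1" and t: "int n dvd 2 * t"
  shows "affine_aut n u j t \<in> hom (GG n) (GG n)"
proof (rule homI)
  fix x y assume "x \<in> carrier (GG n)" "y \<in> carrier (GG n)"
  obtain i r s i' r' s' where xy: "x = ((i, r), s)" "y = ((i', r'), s')"
    by (metis prod.collapse)
  define A where "A = u * i + offset j t r s"
  define B where "B = u * i' + offset j t r' s'"
  define P where "P = u * (i + (if r then - i' else i')) + offset j t (r \<noteq> r') (s \<noteq> s')"
  have "P - (A + (if r then - B else B)) = offset j t (r \<noteq> r') (s \<noteq> s')
      - (offset j t r s + (if r then - offset j t r' s' else offset j t r' s'))"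
    unfolding P_def A_def B_def by (cases r) (simp_all add: algebra_simps)
  then have "P mod int n = (A + (if r then - B else B)) mod int n"
    using dvd_trans[OF t offset_cocycle] by (simp add: mod_eq_dvd_iff)
  also have "\<dots> = (A mod int n + (if r then - (B mod int n) else B mod int n)) mod int n"
    by (cases r) (simp_all add: mod_simps)
  finally have P: "P mod int n = (A mod int n + (if r then - (B mod int n) else B mod int n)) mod int n" .
  have mod_linear: "(u * (a mod int n) + b) mod int n = (u * a + b) mod int n" for a b
    by (metis mod_add_left_eq mod_mult_right_eq)
  have "affine_aut n u j t (x \<otimes>\<^bsub>GG n\<^esub> y) = ((P mod int n, r \<noteq> r'), s \<noteq> s')"
    by (simp add: xy affine_aut_def dih_mult_def P_def mod_linear)
  moreover have "affine_aut n u j t x \<otimes>\<^bsub>GG n\<^esub> affine_aut n u j t y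
      = (((A mod int n + (if r then - (B mod int n) else B mod int n)) mod int n, r \<noteq> r'), s \<noteq> s')"
    by (simp add: xy affine_aut_def dih_mult_def A_def B_def)
  ultimately show "affine_aut n u j t (x \<otimes>\<^bsub>GG n\<^esub> y)
      = affine_aut n u j t x \<otimes>\<^bsub>GG n\<^esub> affine_aut n u j t y"
    by (simp only: P)
qed (use n in \<open>simp add: affine_aut_def GG_carrier\<close>)

lemma affine_aut_inj_on:
  assumes "int n dvd u * w - 1"
  shows "inj_on (affine_aut n u j t) (carrier (GG n))"
proof (rule inj_onI)
  fix x y assume "x \<in> carrier (GG n)" "y \<in> carrier (GG n)"
    and eq: "affine_aut n u j t x = affine_aut n u j t y"
  moreover obtain i r s i' r' s' where xy: "x = ((i, r), s)" "y = ((i', r'), s')"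
    by (metis prod.collapse)
  ultimately have range: "i \<in> {0..<int n}" "i' \<in> {0..<int n}" and rs: "r' = r" "s' = s"
    by (auto simp: GG_carrier affine_aut_def)
  then have "int n dvd u * i - u * i'"
    using eq by (simp add: xy affine_aut_def mod_eq_dvd_iff)
  then have "int n dvd w * (u * i - u * i') - (u * w - 1) * (i - i')"
    using assms by (simp add: dvd_diff dvd_mult dvd_mult2)
  then have "int n dvd i - i'"
    by (simp add: algebra_simps)
  then have "i = i'"
    using range by (metis atLeastLessThan_iff mod_eq_dvd_iff mod_pos_pos_trivial)
  then show "x = y" using xy rs by simp
qed

lemma affine_aut_Aut_pres:
  assumes n: "n \<ge> 1" and "int n dvd u * w - 1" and "int n dvd 2 * t"
  shows "affine_aut n u j t \<in> Aut_pres (GG n) (HH n)"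
proof -
  let ?\<phi> = "affine_aut n u j t"
  have fin: "finite (carrier (GG n))" by (simp add: GG_carrier)
  have hom: "?\<phi> \<in> hom (GG n) (GG n)" using affine_aut_hom n assms(3) .
  have inj: "inj_on ?\<phi> (carrier (GG n))" using affine_aut_inj_on assms(2) .
  have "?\<phi> ` carrier (GG n) = carrier (GG n)"
    using hom inj fin by (intro endo_inj_surj) (auto simp: hom_def)
  then have "bij_betw ?\<phi> (carrier (GG n)) (carrier (GG n))"
    using inj by (simp add: bij_betw_def)
  moreover have H: "HH n \<subseteq> carrier (GG n)"
    by (auto simp: HH_def GG_carrier Dih_def)
  then have "?\<phi> ` HH n = HH n"
    using n fin inj_on_subset[OF inj H]
    by (intro endo_inj_surj) (auto simp: HH_def Dih_def affine_aut_def intro: finite_subset)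
  ultimately show ?thesis
    using hom by (simp add: Aut_pres_def iso_def)
qed

definition IIIb_standard :: "nat \<Rightarrow> ((int \<times> bool) \<times> bool) list" where
  "IIIb_standard n =
     [(dih_mult n dih_y (dih_x n), True), (dih_e, True), (dih_y, False), (dih_x n, False)]"

lemma IIIb_standard_eq:
  "IIIb_standard n = [((- 1 mod int n, True), True), ((0, False), True), ((0, True), False),
     ((1 mod int n, False), False)]"
  by (simp add: IIIb_standard_def dih_mult_def dih_x_def dih_y_def dih_e_def mod_simps)

lemma generate_IIIb_standard:
  assumes n: "n \<ge> 1"
  shows "generate (GG n) (set (IIIb_standard n)) = carrier (GG n)"
proof -
  interpret group "GG n" using GG_group n .
  let ?X = "set (IIIb_standard n)"
  have X: "?X \<subseteq> carrier (GG n)" using n by (auto simp: IIIb_standard_eq GG_carrier)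
  have x: "((1 mod int n, False), False) \<in> generate (GG n) ?X"
    and y: "((0, True), False) \<in> generate (GG n) ?X"
    and z: "((0, False), True) \<in> generate (GG n) ?X"
    by (auto simp: IIIb_standard_eq intro: generate.incl)
  have pow: "((1 mod int n, False), False) [^]\<^bsub>GG n\<^esub> m \<in> generate (GG n) ?X" for m :: nat
    using subgroup_int_pow_closed[OF generate_is_subgroup[OF X] x, of "int m"]
    by (simp add: int_pow_int)
  have rot: "((i, False), False) \<in> generate (GG n) ?X" if "0 \<le> i" "i < int n" for i
    using pow[of "nat i"] that by (simp add: GG_rotation_pow mod_simps)
  have "((i, r), s) \<in> generate (GG n) ?X" if "0 \<le> i" "i < int n" for i r s
    using generate.eng[OF generate.eng[OF rot[OF that] y] z] generate.eng[OF rot[OF that] y]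
      generate.eng[OF rot[OF that] z] rot[OF that] that
    by (cases r; cases s) (auto simp: dih_mult_def)
  then show ?thesis
    using generate_incl[OF X] by (auto simp: GG_carrier)
qed

lemma IIIb_standard_admissible:
  assumes n: "n \<ge> 1"
  shows "admissible_IIIb n 2 n (IIIb_standard n)"
proof -
  interpret group "GG n" using GG_group n .
  have "ord ((0, False), True) = 2"
    using n by (subst ord_eq_2_iff) (auto simp: GG_carrier dih_mult_def)
  moreover have "coprime (1 mod int n) (int n)"
    using n by (cases "n = 1") simp_all
  ultimately show ?thesis
    using n generate_IIIb_standard[OF n]
    by (simp add: admissible_IIIb_def IIIb_standard_eq GG_carrier GG_ord_reflection GG_ord_rotation
        dih_mult_def mod_simps)
qed

lemma hmove_swap_first_pair:
  assumes n: "n \<ge> 1" and "0 \<le> p" "p < int n" "0 \<le> q" "q < int n" and p: "int n dvd 2 * p"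
  shows "hmove (GG n) H [((p, False), True), ((q, True), True), c, d]
                         [((q, True), True), ((p, False), True), c, d]"
proof -
  interpret group "GG n" using GG_group n .
  let ?a = "((p, False), True)"
  have "?a \<otimes>\<^bsub>GG n\<^esub> ?a = \<one>\<^bsub>GG n\<^esub>"
    using p by (simp add: dih_mult_def dvd_eq_mod_eq_0 flip: mult_2)
  then have "inv\<^bsub>GG n\<^esub> ?a = ?a"
    using assms by (intro inv_equality) (auto simp: GG_carrier)
  then have "?a \<otimes>\<^bsub>GG n\<^esub> ((q, True), True) \<otimes>\<^bsub>GG n\<^esub> inv\<^bsub>GG n\<^esub> ?a = ((q, True), True)"
    using assms by (simp add: dih_mult_def mod_simps)
  then show ?thesis
    using hmove.sigma[of 0 "[?a, ((q, True), True), c, d]" "GG n" H] by (simp add: braid_sigma_def)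
qed

lemma hmove_IIIb_standard:
  assumes n: "n \<ge> 1" and k: "coprime k (int n)"
    and p: "int n dvd 2 * p" and rel: "int n dvd q - p - j + k"
  shows "hmove (GG n) (HH n)
    [((q, True), True), ((p, False), True), ((j, True), False), ((k, False), False)]
    (IIIb_standard n)"
proof -
  obtain u v where "u * k + v * int n = 1"
    using bezout_int[of k "int n"] k by (auto simp: coprime_iff_gcd_eq_1)
  then have "u * k - 1 = int n * (- v)"
    by (simp add: algebra_simps)
  then have u: "int n dvd u * k - 1"
    by (rule dvdI)
  let ?\<phi> = "affine_aut n u (- u * j) (- u * p)"
  have "int n dvd 2 * (- u * p)"
    using dvd_mult[OF p, of "- u"] by (simp add: mult.left_commute)
  then have aut: "?\<phi> \<in> Aut_pres (GG n) (HH n)"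
    by (rule affine_aut_Aut_pres[OF n u])
  have "(u * q - u * j - u * p) - (- 1) = u * (q - p - j + k) - (u * k - 1)"
    by (simp add: algebra_simps)
  then have "int n dvd (u * q - u * j - u * p) - (- 1)"
    using dvd_diff[OF dvd_mult[OF rel, of u] u] by (simp only:)
  then have "(u * q + offset (- u * j) (- u * p) True True) mod int n = - 1 mod int n"
    by (simp add: mod_eq_dvd_iff offset_def algebra_simps)
  then have "?\<phi> ((q, True), True) = ((- 1 mod int n, True), True)"
    by (simp add: affine_aut_def)
  moreover have "?\<phi> ((k, False), False) = ((1 mod int n, False), False)"
    using u by (simp add: affine_aut_def offset_def mod_eq_dvd_iff)
  moreover have "?\<phi> ((p, False), True) = ((0, False), True)"
    and "?\<phi> ((j, True), False) = ((0, True), False)"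
    by (simp_all add: affine_aut_def offset_def)
  ultimately show ?thesis
    using hmove.aut[OF aut,
        of "[((q, True), True), ((p, False), True), ((j, True), False), ((k, False), False)]"]
    by (simp add: IIIb_standard_eq)
qed

lemma hurwitz_equiv_IIIb_standard:
  assumes n: "n \<ge> 1" and "0 \<le> p" "p < int n" "0 \<le> q" "q < int n"
    and v: "v = [((q, True), True), ((p, False), True), ((j, True), False), ((k, False), False)]
          \<or> v = [((p, False), True), ((q, True), True), ((j, True), False), ((k, False), False)]"
    and "coprime k (int n)" "int n dvd 2 * p" "int n dvd q - p - j + k"
  shows "hurwitz_equiv (GG n) (HH n) v (IIIb_standard n)"
  using v
proof
  note std = r_into_rtranclp[of "hmove (GG n) (HH n)", OF hmove_IIIb_standard[OF n assms(7-9)]]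
  show ?thesis if "v = [((q, True), True), ((p, False), True), ((j, True), False), ((k, False), False)]"
    using std that by (simp add: hurwitz_equiv_def)
  show ?thesis if "v = [((p, False), True), ((q, True), True), ((j, True), False), ((k, False), False)]"
    using converse_rtranclp_into_rtranclp[OF hmove_swap_first_pair[OF n assms(2-5,8)] std] that
    by (simp add: hurwitz_equiv_def)
qed

lemma admissible_IIIbE:
  assumes "admissible_IIIb n c3 c4 v"
  obtains i1 r1 i2 r2 j r3 k r4 where
    "v = [((i1, r1), True), ((i2, r2), True), ((j, r3), False), ((k, r4), False)]"
proof -
  obtain w0 w1 w2 w3 where v: "v = [w0, w1, w2, w3]"
    using assms by (auto simp: admissible_IIIb_def length_Suc_conv numeral_eq_Suc)
  then have "snd w0" "snd w1" "\<not> snd w2" "\<not> snd w3"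
    using assms by (simp_all add: admissible_IIIb_def)
  then show thesis
    using that v by (metis (full_types) prod.collapse)
qed

lemma admissible_IIIb_reflections:
  assumes n: "n \<ge> 1" and c4: "c4 > 2" and adm: "admissible_IIIb n c3 c4 v"
    and v: "v = [((i1, r1), True), ((i2, r2), True), ((j, r3), False), ((k, r4), False)]"
  shows "r3" and "\<not> r4" and "r1 \<noteq> r2"
proof -
  interpret group "GG n" using GG_group n .
  have carrier: "set v \<subseteq> carrier (GG n)" and gen: "generate (GG n) (set v) = carrier (GG n)"
    and ord: "ord ((k, r4), False) = c4"
    and prod: "((i1, r1), True) \<otimes>\<^bsub>GG n\<^esub> ((i2, r2), True) \<otimes>\<^bsub>GG n\<^esub> ((j, r3), False)
      \<otimes>\<^bsub>GG n\<^esub> ((k, r4), False) = \<one>\<^bsub>GG n\<^esub>"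
    using adm by (simp_all add: admissible_IIIb_def v)
  have "0 \<le> k" "k < int n"
    using carrier by (auto simp: v GG_carrier)
  then show r4: "\<not> r4"
    using ord c4 GG_ord_reflection[OF n] by auto
  have parity: "((r1 \<noteq> r2) \<noteq> r3) = r4"
    using arg_cong[OF prod, of "\<lambda>x. snd (fst x)"] by (simp add: dih_mult_def)
  show r3: r3
  proof (rule ccontr)
    assume "\<not> r3"
    then have "r1 = r2" using parity r4 by auto
    then show False
      using GG_generating_set_reflections[OF n carrier gen] \<open>\<not> r3\<close> r4 by (auto simp: v)
  qed
  show "r1 \<noteq> r2"
    using parity r3 r4 by auto
qed

lemma admissible_IIIb_normal_form:
  assumes n: "n \<ge> 1" and c4: "c4 > 2" and adm: "admissible_IIIb n c3 c4 v"
  obtains p q j k where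
    "v = [((q, True), True), ((p, False), True), ((j, True), False), ((k, False), False)]
      \<or> v = [((p, False), True), ((q, True), True), ((j, True), False), ((k, False), False)]"
    "int n dvd 2 * p" "int n dvd q - p - j + k"
proof -
  interpret group "GG n" using GG_group n .
  obtain i1 r1 i2 r2 j r3 k r4 where
    v: "v = [((i1, r1), True), ((i2, r2), True), ((j, r3), False), ((k, r4), False)]"
    using adm by (rule admissible_IIIbE)
  note r = admissible_IIIb_reflections[OF n c4 adm v]
  have carrier: "set v \<subseteq> carrier (GG n)"
    and ord: "ord ((i1, r1), True) = 2" "ord ((i2, r2), True) = 2"
    and prod: "((i1, r1), True) \<otimes>\<^bsub>GG n\<^esub> ((i2, r2), True) \<otimes>\<^bsub>GG n\<^esub> ((j, r3), False)
      \<otimes>\<^bsub>GG n\<^esub> ((k, r4), False) = \<one>\<^bsub>GG n\<^esub>"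
    using adm by (simp_all add: admissible_IIIb_def v)
  have range: "0 \<le> i1" "i1 < int n" "0 \<le> i2" "i2 < int n"
    using carrier by (auto simp: v GG_carrier)
  have rotation_square: "int n dvd 2 * i" if "ord ((i, False), True) = 2" "0 \<le> i" "i < int n" for i
  proof -
    have "((i, False), True) \<otimes>\<^bsub>GG n\<^esub> ((i, False), True) = \<one>\<^bsub>GG n\<^esub>"
      using that ord_eq_2_iff[of "((i, False), True)"] by (simp add: GG_carrier)
    then show ?thesis by (simp add: dih_mult_def dvd_eq_mod_eq_0 flip: mult_2)
  qed
  show thesis
  proof (cases r1)
    case True
    with r have "\<not> r2" by simp
    with prod True r have "(i1 - i2 - j + k) mod int n = 0"
      by (simp add: dih_mult_def mod_simps)
    then show thesis
      using that[of i1 i2 j k] rotation_square[of i2] ord(2) range r True \<open>\<not> r2\<close>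
      by (simp add: v dvd_eq_mod_eq_0)
  next
    case False
    with r have r2 by simp
    with prod False r have "(i2 + i1 - j + k) mod int n = 0"
      by (simp add: dih_mult_def mod_simps add.commute)
    then have "int n dvd i2 + i1 - j + k"
      by (simp add: dvd_eq_mod_eq_0)
    moreover have "int n dvd 2 * i1"
      using rotation_square[of i1] ord(1) range False by simp
    ultimately have "int n dvd (i2 + i1 - j + k) - 2 * i1"
      by (rule dvd_diff)
    moreover have "(i2 + i1 - j + k) - 2 * i1 = i2 - i1 - j + k"
      by simp
    ultimately show thesis
      using that[of i2 i1 j k] rotation_square[of i1] ord(1) range r False \<open>r2\<close>
      by (simp add: v)
  qed
qed

theorem lemma5p14:
  fixes n c3 c4 :: nat and v :: "((int \<times> bool) \<times> bool) list"
  assumes "n \<ge> 1"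
    and "c3 \<le> c4" and "c3 \<ge> 2" and "c4 > 2"
    and "admissible_IIIb n c3 c4 v"
  shows "c3 = 2 \<and> c4 = n \<and>
    admissible_IIIb n 2 n
      [(dih_mult n dih_y (dih_x n), True), (dih_e, True), (dih_y, False), (dih_x n, False)] \<and>
    hurwitz_equiv (GG n) (HH n) v
      [(dih_mult n dih_y (dih_x n), True), (dih_e, True), (dih_y, False), (dih_x n, False)]"
proof -
  obtain p q j k where
    shape: "v = [((q, True), True), ((p, False), True), ((j, True), False), ((k, False), False)]
      \<or> v = [((p, False), True), ((q, True), True), ((j, True), False), ((k, False), False)]"
    and p: "int n dvd 2 * p" and rel: "int n dvd q - p - j + k"
    by (rule admissible_IIIb_normal_form[OF assms(1,4,5)])
  have X: "set v = {((q, True), True), ((p, False), True), ((j, True), False), ((k, False), False)}"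
    using shape by auto
  have carrier: "set v \<subseteq> carrier (GG n)" and gen: "generate (GG n) (set v) = carrier (GG n)"
    and ord: "group.ord (GG n) (v ! 2) = c3" "group.ord (GG n) (v ! 3) = c4"
    using assms(5) unfolding admissible_IIIb_def by blast+
  have range: "0 \<le> p" "p < int n" "0 \<le> q" "q < int n" "0 \<le> j" "j < int n" "0 \<le> k" "k < int n"
    using carrier by (auto simp: X GG_carrier)
  have coprime: "coprime k (int n)"
    using GG_generating_set_coprime[OF assms(1) X carrier gen p rel] .
  have "c3 = 2"
    using ord(1) shape GG_ord_reflection[OF assms(1) range(5,6)] by auto
  moreover have "c4 = n"
    using ord(2) shape GG_ord_rotation[OF assms(1) range(7,8) coprime] by auto
  moreover have "hurwitz_equiv (GG n) (HH n) v (IIIb_standard n)"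
    using hurwitz_equiv_IIIb_standard[OF assms(1) range(1-4) shape coprime p rel] .
  ultimately show ?thesis
    using IIIb_standard_admissible[OF assms(1)] by (simp add: IIIb_standard_def)
qed

end
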